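(* Let $0<\lambda_l<\lambda_u$ and let $n=T_{k+1}-T_k\ge 1$ be an integer. For $\eta=(\eta_{T_k+1},\dots,\eta_{T_{k+1}})\in\mathbb{R}^n$ define $$F(\eta)=\max_{\lambda\in[\lambda_l,\lambda_u]}\ \prod_{t=T_k+1}^{T_{k+1}}\Bigl[1-\Bigl(\bigl(\tfrac{1}{\lambda_l}-\tfrac{1}{\lambda_u}\bigr)\eta_t+\tfrac{1}{\lambda_u}\Bigr)\lambda\Bigr]^2 .$$ Set $\varphi=2\lambda_u/\lambda_l$, $\eta_{\max}=1$, $\eta_{\min}=0$. Then the UBA learning rates $$\eta^*_t=\frac{2\bigl(1+\cos\theta_t\bigr)}{2\varphi+(2-\varphi)\bigl(1+\cos\theta_t\bigr)},\qquad \theta_t=\frac{(2(t-T_k)-1)\pi}{2(T_{k+1}-T_k)},\quad t=T_k+1,\dots,T_{k+1},$$ (equivalently $\eta^*_t=\frac{1+\cos\theta_t}{2\kappa-(\kappa-1)(1+\cos\theta_t)}$ with $\kappa=\lambda_u/\lambda_l$) satisfy $\eta^*\in[0,1]^n$ and $F(\eta^* )=\min_{\eta\in\mathbb{R}^n}F(\eta)$, i.e. $\eta^*$ is an exact minimizer of this min-max problem.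
   Context: This is the "UBA schedule" $\eta_t=(\eta_{\max}-\eta_{\min})\frac{2(1+\cos\theta_t)}{2\varphi+(2-\varphi)(1+\cos\theta_t)}+\eta_{\min}$ on the phase $t\in\{T_k+1,\dots,T_{k+1}\}$, specialized to $\eta_{\max}=1,\eta_{\min}=0$. The quantity inside the objective is a polynomial in $\lambda$ of degree at most $n$ taking the value $1$ at $\lambda=0$. *)

theory Defs
  imports "HOL-Analysis.Analysis"
begin

text \<open>Objective of the min-max problem on the phase t = Tk+1, ..., Tk1.
  The maximum over the compact interval [lam_l, lam_u] of a continuous function is
  written as a supremum (it is attained).\<close>
definition uba_F :: "real \<Rightarrow> real \<Rightarrow> nat \<Rightarrow> nat \<Rightarrow> (nat \<Rightarrow> real) \<Rightarrow> real" where
  "uba_F lam_l lam_u Tk Tk1 eta =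
     (SUP lam\<in>{lam_l..lam_u}.
        (\<Prod>t\<in>{Tk+1..Tk1}. (1 - ((1/lam_l - 1/lam_u) * eta t + 1/lam_u) * lam)^2))"

definition uba_theta :: "nat \<Rightarrow> nat \<Rightarrow> nat \<Rightarrow> real" where
  "uba_theta Tk Tk1 t = (2 * (real t - real Tk) - 1) * pi / (2 * (real Tk1 - real Tk))"

definition uba_eta :: "real \<Rightarrow> real \<Rightarrow> nat \<Rightarrow> nat \<Rightarrow> nat \<Rightarrow> real" where
  "uba_eta lam_l lam_u Tk Tk1 t =
     (let phi = 2 * lam_u / lam_l; c = 1 + cos (uba_theta Tk Tk1 t)
      in 2 * c / (2 * phi + (2 - phi) * c))"

end

(*
  Writing a_t = (1/lam_l - 1/lam_u) eta_t + 1/lam_u, the objective is the maximum over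
  [lam_l, lam_u] of p(lam)^2 for p = prod_t (1 - a_t lam), a real polynomial of degree at
  most n with p(0) = 1.  The UBA rates are exactly those for which
  the 1/a_t are the Chebyshev nodes of [lam_l, lam_u]; then
  p(lam) = T_n((u + l - 2 lam)/(u - l)) / T_n((u + l)/(u - l)), so |p| <= M := 1/T_n((u+l)/(u-l))
  on the interval, with p = +-M alternately at the n + 1 extrema of T_n.  If a competitor q
  had |q| < M at these points, then p - q would change sign between consecutive extrema and
  vanish at 0, giving n + 1 roots of a polynomial of degree at most n; hence p = q, which is
  absurd.
*)
theory Submission
  imports Defs "HOL-Computational_Algebra.Polynomial"
begin

section \<open>Chebyshev polynomials\<close>

fun cheb_poly :: "nat \<Rightarrow> real poly" where
  "cheb_poly 0 = 1"
| "cheb_poly (Suc 0) = [:0, 1:]"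
| "cheb_poly (Suc (Suc n)) = pCons 0 (smult 2 (cheb_poly (Suc n))) - cheb_poly n"

lemma poly_cheb_poly_cos: "poly (cheb_poly n) (cos x) = cos (real n * x)"
proof (induction n rule: cheb_poly.induct)
  case (3 n)
  have "cos (real (Suc (Suc n)) * x) = cos ((real n + 1) * x + x)"
    by (simp add: algebra_simps)
  also have "\<dots> = 2 * cos x * cos ((real n + 1) * x) - cos ((real n + 1) * x - x)"
    unfolding cos_add cos_diff by (simp add: algebra_simps)
  also have "(real n + 1) * x - x = real n * x"
    by (simp add: algebra_simps)
  finally show ?case
    using 3 by (simp add: algebra_simps)
qed auto

lemma degree_cheb_poly_le: "degree (cheb_poly n) \<le> n"
proof (induction n rule: cheb_poly.induct)
  case (3 n)
  have "degree (pCons 0 (smult 2 (cheb_poly (Suc n)))) \<le> Suc (Suc n)"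
    using "3.IH"(1) by (simp add: degree_pCons_le le_trans)
  with "3.IH"(2) show ?case
    by (auto intro: order.trans[OF degree_diff_le_max])
qed auto

lemma coeff_cheb_poly_self: "coeff (cheb_poly n) n = (if n = 0 then 1 else 2 ^ (n - 1))"
proof (induction n rule: cheb_poly.induct)
  case (3 n)
  have "coeff (cheb_poly n) (Suc (Suc n)) = 0"
    using degree_cheb_poly_le[of n] by (intro coeff_eq_0) simp
  with "3.IH"(1) show ?case
    by simp
qed auto

lemma abs_poly_cheb_poly_le_1:
  assumes "\<bar>y\<bar> \<le> 1"
  shows "\<bar>poly (cheb_poly n) y\<bar> \<le> 1"
  using assms poly_cheb_poly_cos[of n "arccos y"] by simp

lemma poly_cheb_poly_extremum:
  assumes "k \<le> n"
  shows "poly (cheb_poly n) (cos (real k * pi / real n)) = (-1) ^ k"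
  using assms by (cases "n = 0") (simp_all add: poly_cheb_poly_cos)

definition cheb_node :: "nat \<Rightarrow> nat \<Rightarrow> real" where
  "cheb_node n j = cos ((2 * real j + 1) * pi / (2 * real n))"

lemma poly_cheb_poly_cheb_node:
  assumes "n \<noteq> 0"
  shows "poly (cheb_poly n) (cheb_node n j) = 0"
proof -
  have eq: "real n * ((2 * real j + 1) * pi / (2 * real n)) = of_int (2 * int j + 1) * (pi / 2)"
    using assms by (simp add: field_simps)
  show ?thesis
    unfolding cheb_node_def poly_cheb_poly_cos cos_zero_iff_int eq
    by (intro exI[of _ "2 * int j + 1"]) simp
qed

lemma inj_on_cheb_node: "inj_on (cheb_node n) {..<n}"
proof (rule inj_onI)
  have angle: "0 \<le> (2 * real j + 1) * pi / (2 * real n) \<and> (2 * real j + 1) * pi / (2 * real n) \<le> pi"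
    if "j < n" for j
  proof -
    have "(2 * real j + 1) * pi \<le> (2 * real n) * pi"
      using that by (intro mult_right_mono) simp_all
    then show ?thesis
      using that by (simp add: divide_le_eq)
  qed
  fix i j assume i: "i \<in> {..<n}" and "j \<in> {..<n}" and "cheb_node n i = cheb_node n j"
  then have "(2 * real i + 1) * pi / (2 * real n) = (2 * real j + 1) * pi / (2 * real n)"
    using angle[of i] angle[of j] unfolding cheb_node_def by (metis cos_inj_pi lessThan_iff)
  then show "i = j"
    using i by simp
qed

lemma cheb_poly_eq_prod_cheb_node:
  assumes "n \<noteq> 0"
  shows "cheb_poly n = smult (2 ^ (n - 1)) (\<Prod>j<n. [:- cheb_node n j, 1:])"
proof (rule poly_eqI_degree_lead_coeff[where n = n and A = "cheb_node n ` {..<n}"])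
  have "degree (\<Prod>j<n. [:- cheb_node n j, 1:]) = n"
    by (subst degree_prod_eq_sum_degree) auto
  moreover have "lead_coeff (\<Prod>j<n. [:- cheb_node n j, 1:]) = 1"
    by (simp add: lead_coeff_prod)
  ultimately show "coeff (cheb_poly n) n = coeff (smult (2 ^ (n - 1)) (\<Prod>j<n. [:- cheb_node n j, 1:])) n"
    "degree (smult (2 ^ (n - 1)) (\<Prod>j<n. [:- cheb_node n j, 1:])) \<le> n"
    using assms by (simp_all add: coeff_cheb_poly_self)
  show "n \<le> card (cheb_node n ` {..<n})"
    by (simp add: card_image inj_on_cheb_node)
qed (use assms in \<open>auto simp: degree_cheb_poly_le poly_cheb_poly_cheb_node poly_prod\<close>)

lemma poly_cheb_poly_pos:
  assumes "1 < y"
  shows "0 < poly (cheb_poly n) y"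
proof (cases "n = 0")
  case False
  have "cheb_node n j < y" for j
    using assms cos_le_one[of "(2 * real j + 1) * pi / (2 * real n)"] unfolding cheb_node_def by linarith
  then show ?thesis
    using False by (simp add: cheb_poly_eq_prod_cheb_node poly_prod prod_pos)
qed simp

section \<open>Extremal property of Chebyshev polynomials\<close>

lemma degree_prod_linear_le:
  fixes a b :: "'a \<Rightarrow> 'b::comm_semiring_1"
  shows "degree (\<Prod>i\<in>I. [:a i, b i:]) \<le> card I"
proof (cases "finite I")
  case True
  have "degree (\<Prod>i\<in>I. [:a i, b i:]) \<le> (\<Sum>i\<in>I. degree [:a i, b i:])"
    using degree_prod_sum_le[OF True, of "\<lambda>i. [:a i, b i:]"] by (simp only: comp_def)
  also have "\<dots> \<le> (\<Sum>i\<in>I. 1)"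
    by (intro sum_mono) simp
  finally show ?thesis
    by simp
qed simp

lemma alternation_imp_abs_poly_ge:
  fixes p q :: "real poly" and y :: "nat \<Rightarrow> real"
  assumes "degree p \<le> n" "degree q \<le> n" "poly q 0 = poly p 0"
    and mono: "strict_mono_on {..n} y" and "0 < y 0"
    and alt: "\<And>k. k \<le> n \<Longrightarrow> K \<le> (-1) ^ k * poly p (y k)"
  shows "\<exists>k\<le>n. K \<le> \<bar>poly q (y k)\<bar>"
proof (rule ccontr)
  assume "\<not> ?thesis"
  then have small: "\<bar>poly q (y k)\<bar> < K" if "k \<le> n" for k
    using that by force
  define r where "r = p - q"
  have sign: "0 < (-1) ^ k * poly r (y k)" if "k \<le> n" for k
  proof -
    have "(-1) ^ k * poly q (y k) \<le> \<bar>poly q (y k)\<bar>"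
      using abs_ge_self[of "(-1) ^ k * poly q (y k)"] by (simp add: abs_mult)
    then show ?thesis
      using alt[OF that] small[OF that] by (simp add: r_def algebra_simps)
  qed
  have "\<exists>z. y k < z \<and> z < y (Suc k) \<and> poly r z = 0" if "k < n" for k
  proof (rule poly_IVT)
    show "y k < y (Suc k)"
      using that by (intro strict_mono_onD[OF mono]) auto
    have "0 < ((-1) ^ k * poly r (y k)) * ((-1) ^ Suc k * poly r (y (Suc k)))"
      using that by (intro mult_pos_pos sign) simp_all
    moreover have "(-1 :: real) ^ k * (-1) ^ k = 1"
      by (simp flip: power_add)
    ultimately show "poly r (y k) * poly r (y (Suc k)) < 0"
      by (simp add: algebra_simps)
  qed
  then obtain z where z: "\<And>k. k < n \<Longrightarrow> y k < z k \<and> z k < y (Suc k) \<and> poly r (z k) = 0"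
    by metis
  have z_pos: "0 < z k" if "k < n" for k
  proof -
    have "y 0 \<le> y k"
      using that by (intro strict_mono_on_leD[OF mono]) auto
    then show ?thesis
      using z[OF that] \<open>0 < y 0\<close> by linarith
  qed
  have "strict_mono_on {..<n} z"
  proof (rule strict_mono_onI)
    fix i j assume "i \<in> {..<n}" "j \<in> {..<n}" "i < j"
    then have "y (Suc i) \<le> y j"
      using strict_mono_on_leD[OF mono] by simp
    then show "z i < z j"
      using z \<open>i \<in> {..<n}\<close> \<open>j \<in> {..<n}\<close> by (meson lessThan_iff less_le_trans order_less_trans)
  qed
  then have "inj_on z {..<n}"
    by (rule strict_mono_on_imp_inj_on)
  moreover have "0 \<notin> z ` {..<n}"
    using z_pos by fastforce
  ultimately have "card (insert 0 (z ` {..<n})) = Suc n"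
    by (simp add: card_image)
  moreover have "poly p x = poly q x" if "x \<in> insert 0 (z ` {..<n})" for x
    using that z assms(3) by (auto simp: r_def)
  ultimately have "p = q"
    using assms(1,2) by (intro poly_eqI_degree[of "insert 0 (z ` {..<n})"]) auto
  then show False
    using sign[of 0] by (simp add: r_def)
qed

definition cheb_extremal :: "real \<Rightarrow> real \<Rightarrow> nat \<Rightarrow> real poly" where
  "cheb_extremal l u n =
     smult (1 / poly (cheb_poly n) ((u + l) / (u - l)))
       (pcompose (cheb_poly n) [:(u + l) / (u - l), - 2 / (u - l):])"

lemma poly_cheb_extremal:
  "poly (cheb_extremal l u n) x =
     poly (cheb_poly n) ((u + l - 2 * x) / (u - l)) / poly (cheb_poly n) ((u + l) / (u - l))"
  by (simp add: cheb_extremal_def poly_pcompose diff_divide_distrib mult.commute)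

lemma degree_cheb_extremal_le: "degree (cheb_extremal l u n) \<le> n"
proof -
  have "degree (pcompose (cheb_poly n) [:(u + l) / (u - l), - 2 / (u - l):])
          \<le> degree (cheb_poly n) * degree [:(u + l) / (u - l), - 2 / (u - l):]"
    by (rule degree_pcompose_le)
  also have "\<dots> \<le> n * 1"
    by (intro mult_le_mono degree_cheb_poly_le) simp
  finally show ?thesis
    unfolding cheb_extremal_def by (simp add: le_trans[OF degree_smult_le])
qed

context
  fixes l u :: real
  assumes pos: "0 < l" and lt: "l < u"
begin

lemma poly_cheb_poly_at_image_0_pos: "0 < poly (cheb_poly n) ((u + l) / (u - l))"
  using pos lt by (intro poly_cheb_poly_pos) (simp add: field_simps)

lemma poly_cheb_extremal_0: "poly (cheb_extremal l u n) 0 = 1"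
  using poly_cheb_poly_at_image_0_pos[of n] by (simp add: poly_cheb_extremal)

lemma abs_poly_cheb_extremal_le:
  assumes "x \<in> {l..u}"
  shows "\<bar>poly (cheb_extremal l u n) x\<bar> \<le> 1 / poly (cheb_poly n) ((u + l) / (u - l))"
proof -
  have "\<bar>(u + l - 2 * x) / (u - l)\<bar> \<le> 1"
    unfolding abs_le_iff using assms lt by (auto simp: field_simps)
  then show ?thesis
    using abs_poly_cheb_poly_le_1 poly_cheb_poly_at_image_0_pos[of n]
    by (simp add: poly_cheb_extremal abs_div divide_right_mono)
qed

lemma affine_image_mem_interval:
  assumes "\<bar>c\<bar> \<le> 1"
  shows "(u + l) / 2 - (u - l) / 2 * c \<in> {l..u}"
proof -
  have "\<bar>(u - l) / 2 * c\<bar> \<le> (u - l) / 2"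
    using assms lt by (simp add: abs_mult mult_left_le)
  then show ?thesis
    by (auto simp: abs_le_iff field_simps)
qed

lemma cheb_extremal_minimal:
  fixes q :: "real poly"
  assumes "degree q \<le> n" and "poly q 0 = 1"
  shows "\<exists>x\<in>{l..u}. 1 / poly (cheb_poly n) ((u + l) / (u - l)) \<le> \<bar>poly q x\<bar>"
proof -
  define y where "y k = (u + l) / 2 - (u - l) / 2 * cos (real k * pi / real n)" for k
  have y_bounds: "y k \<in> {l..u}" for k
    unfolding y_def by (intro affine_image_mem_interval abs_cos_le_one)
  have "strict_mono_on {..n} y"
  proof (rule strict_mono_onI)
    fix i j assume "i \<in> {..n}" "j \<in> {..n}" "i < j"
    then have "cos (real j * pi / real n) < cos (real i * pi / real n)"
      by (intro cos_monotone_0_pi) (auto simp: field_simps)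
    then show "y i < y j"
      using lt by (simp add: y_def)
  qed
  moreover have "0 < y 0"
    using pos by (simp add: y_def)
  moreover have "(-1) ^ k * poly (cheb_extremal l u n) (y k) = 1 / poly (cheb_poly n) ((u + l) / (u - l))"
    if "k \<le> n" for k
  proof -
    have "(u + l - 2 * y k) / (u - l) = cos (real k * pi / real n)"
      using lt by (simp add: y_def field_simps)
    then show ?thesis
      using that by (simp add: poly_cheb_extremal poly_cheb_poly_extremum flip: power_add)
  qed
  ultimately obtain k where "1 / poly (cheb_poly n) ((u + l) / (u - l)) \<le> \<bar>poly q (y k)\<bar>"
    using assms poly_cheb_extremal_0 degree_cheb_extremal_le
    by (metis alternation_imp_abs_poly_ge order.refl)
  then show ?thesis
    using y_bounds by blast
qed

lemma cheb_extremal_eq_prod: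
  "cheb_extremal l u n = (\<Prod>j<n. [:1, - 1 / ((u + l) / 2 - (u - l) / 2 * cheb_node n j):])"
proof -
  define \<mu> where "\<mu> j = (u + l) / 2 - (u - l) / 2 * cheb_node n j" for j
  define P where "P = (\<Prod>j<n. [:1, - 1 / \<mu> j:])"
  have "\<mu> j \<in> {l..u}" for j
    unfolding \<mu>_def cheb_node_def by (intro affine_image_mem_interval abs_cos_le_one)
  then have \<mu>_pos: "0 < \<mu> j" for j
    using pos by (meson atLeastAtMost_iff less_le_trans)
  have "inj_on \<mu> {..<n}"
    using inj_on_cheb_node[of n] lt by (auto simp: inj_on_def \<mu>_def)
  moreover have "0 \<notin> \<mu> ` {..<n}"
    using \<mu>_pos by (metis imageE less_irrefl)
  ultimately have card: "card (insert 0 (\<mu> ` {..<n})) = Suc n"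
    by (simp add: card_image)
  have "poly (cheb_extremal l u n) x = poly P x" if x: "x \<in> insert 0 (\<mu> ` {..<n})" for x
  proof (cases "x = 0")
    case True
    then show ?thesis
      by (simp add: poly_cheb_extremal_0 P_def poly_prod)
  next
    case False
    then obtain j where j: "j < n" "x = \<mu> j"
      using x by auto
    have "(u + l - 2 * \<mu> j) / (u - l) = cheb_node n j"
      using lt by (simp add: \<mu>_def field_simps)
    then have "poly (cheb_extremal l u n) x = 0"
      using j by (simp add: poly_cheb_extremal poly_cheb_poly_cheb_node)
    moreover have "poly P x = 0"
      using j \<mu>_pos[of j] by (auto simp: P_def poly_prod intro!: bexI[of _ j])
    ultimately show ?thesis
      by simp
  qed
  moreover have "degree P \<le> n"
    using degree_prod_linear_le[of "\<lambda>_. 1" _ "{..<n}"] by (simp add: P_def)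
  ultimately have "cheb_extremal l u n = P"
    using card degree_cheb_extremal_le[of l u n]
    by (intro poly_eqI_degree[where A = "insert 0 (\<mu> ` {..<n})"]) auto
  then show ?thesis
    by (simp add: P_def \<mu>_def)
qed

end

section \<open>The UBA schedule\<close>

lemma uba_F_eq_SUP_poly:
  "uba_F l u Tk Tk1 eta =
     (SUP x\<in>{l..u}. (poly (\<Prod>t\<in>{Tk+1..Tk1}. [:1, - ((1/l - 1/u) * eta t + 1/u):]) x)\<^sup>2)"
  unfolding uba_F_def poly_prod prod_power_distrib by (simp add: algebra_simps)

lemma uba_eta_in_unit_interval:
  assumes "0 < l" and "l \<le> u"
  shows "uba_eta l u Tk Tk1 t \<in> {0..1}"
proof -
  define \<phi> where "\<phi> = 2 * u / l"
  define c where "c = 1 + cos (uba_theta Tk Tk1 t)"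
  have c: "0 \<le> c" "c \<le> 2"
    unfolding c_def using cos_ge_minus_one[of "uba_theta Tk Tk1 t"] cos_le_one[of "uba_theta Tk Tk1 t"]
    by linarith+
  have "2 \<le> \<phi>"
    using assms by (simp add: \<phi>_def field_simps)
  then have "(\<phi> - 2) * c \<le> (\<phi> - 2) * 2" "\<phi> * c \<le> \<phi> * 2"
    using c by (intro mult_left_mono; simp)+
  then have "0 < 2 * \<phi> + (2 - \<phi>) * c" "2 * c \<le> 2 * \<phi> + (2 - \<phi>) * c"
    by (simp_all add: algebra_simps)
  then show ?thesis
    using c by (simp add: uba_eta_def Let_def \<phi>_def[symmetric] c_def[symmetric])
qed

lemma uba_factor_coeff_eq_inverse_node:
  assumes "0 < l" and "l < u"
  shows "(1/l - 1/u) * uba_eta l u Tk Tk1 t + 1/u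
           = 1 / ((u + l) / 2 - (u - l) / 2 * cos (uba_theta Tk Tk1 t))"
proof -
  define c where "c = cos (uba_theta Tk Tk1 t)"
  define E where "E = u + l - (u - l) * c"
  have "(u - l) * c \<le> u - l"
    using assms by (simp add: c_def mult_left_le)
  then have "0 < E"
    unfolding E_def using assms by linarith
  have "2 * (2 * u / l) + (2 - 2 * u / l) * (1 + c) = 2 * E / l"
    using assms by (simp add: E_def field_simps)
  then have "uba_eta l u Tk Tk1 t = l * (1 + c) / E"
    using assms \<open>0 < E\<close> by (simp add: uba_eta_def Let_def c_def[symmetric]) (simp add: field_simps)
  then have coeff: "(1/l - 1/u) * uba_eta l u Tk Tk1 t + 1/u = 2 / E"
    using assms \<open>0 < E\<close> by (simp add: E_def field_simps)
  have node: "(u + l) / 2 - (u - l) / 2 * c = E / 2"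
    by (simp add: E_def field_simps)
  show ?thesis
    unfolding c_def[symmetric] coeff node by simp
qed

lemma cos_uba_theta:
  assumes "t \<in> {Tk+1..Tk1}"
  shows "cos (uba_theta Tk Tk1 t) = cheb_node (Tk1 - Tk) (t - Tk - 1)"
  using assms by (simp add: uba_theta_def cheb_node_def of_nat_diff algebra_simps)

lemma uba_poly_eq_cheb_extremal:
  assumes "0 < l" and "l < u"
  shows "(\<Prod>t\<in>{Tk+1..Tk1}. [:1, - ((1/l - 1/u) * uba_eta l u Tk Tk1 t + 1/u):])
           = cheb_extremal l u (Tk1 - Tk)"
proof -
  have "{Tk+1..Tk1} = (\<lambda>j. Tk + Suc j) ` {..<Tk1 - Tk}"
    by (auto simp: image_iff Bex_def) presburger
  then have "(\<Prod>t\<in>{Tk+1..Tk1}. [:1, - ((1/l - 1/u) * uba_eta l u Tk Tk1 t + 1/u):])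
      = (\<Prod>j<Tk1 - Tk. [:1, - 1 / ((u + l) / 2 - (u - l) / 2 * cheb_node (Tk1 - Tk) j):])"
    by (intro prod.reindex_cong[where l = "\<lambda>j. Tk + Suc j"])
      (simp_all add: inj_on_def uba_factor_coeff_eq_inverse_node[OF assms] cos_uba_theta)
  also have "\<dots> = cheb_extremal l u (Tk1 - Tk)"
    using assms by (simp add: cheb_extremal_eq_prod)
  finally show ?thesis .
qed

lemma bdd_above_poly_square: "bdd_above ((\<lambda>x. (poly p x)\<^sup>2) ` {a..b :: real})"
proof -
  have "compact ((\<lambda>x. (poly p x)\<^sup>2) ` {a..b})"
    by (intro compact_continuous_image continuous_intros) auto
  then show ?thesis
    by (intro bounded_imp_bdd_above compact_imp_bounded)
qed

lemma uba_F_uba_eta_le: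
  assumes "0 < l" and "l < u"
  shows "uba_F l u Tk Tk1 (uba_eta l u Tk Tk1)
           \<le> (1 / poly (cheb_poly (Tk1 - Tk)) ((u + l) / (u - l)))\<^sup>2"
  unfolding uba_F_eq_SUP_poly uba_poly_eq_cheb_extremal[OF assms]
proof (rule cSUP_least)
  show "{l..u} \<noteq> {}"
    using assms by simp
  fix x assume "x \<in> {l..u}"
  then have "\<bar>poly (cheb_extremal l u (Tk1 - Tk)) x\<bar>\<^sup>2
               \<le> (1 / poly (cheb_poly (Tk1 - Tk)) ((u + l) / (u - l)))\<^sup>2"
    by (intro power_mono abs_poly_cheb_extremal_le[OF assms]) simp_all
  then show "(poly (cheb_extremal l u (Tk1 - Tk)) x)\<^sup>2
               \<le> (1 / poly (cheb_poly (Tk1 - Tk)) ((u + l) / (u - l)))\<^sup>2"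
    by simp
qed

lemma uba_F_ge:
  assumes "0 < l" and "l < u"
  shows "(1 / poly (cheb_poly (Tk1 - Tk)) ((u + l) / (u - l)))\<^sup>2 \<le> uba_F l u Tk Tk1 eta"
proof -
  define q where "q = (\<Prod>t\<in>{Tk+1..Tk1}. [:1, - ((1/l - 1/u) * eta t + 1/u):])"
  have "degree q \<le> Tk1 - Tk"
    using degree_prod_linear_le[of "\<lambda>_. 1" _ "{Tk+1..Tk1}"] by (simp add: q_def)
  moreover have "poly q 0 = 1"
    by (simp add: q_def poly_prod)
  ultimately obtain x where x: "x \<in> {l..u}"
    and "1 / poly (cheb_poly (Tk1 - Tk)) ((u + l) / (u - l)) \<le> \<bar>poly q x\<bar>"
    using cheb_extremal_minimal[OF assms] by blast
  then have "(1 / poly (cheb_poly (Tk1 - Tk)) ((u + l) / (u - l)))\<^sup>2 \<le> \<bar>poly q x\<bar>\<^sup>2"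
    using less_imp_le[OF poly_cheb_poly_at_image_0_pos[OF assms]] by (intro power_mono) simp_all
  also have "\<dots> \<le> (SUP x\<in>{l..u}. (poly q x)\<^sup>2)"
    using x by (simp add: cSUP_upper[OF _ bdd_above_poly_square])
  finally show ?thesis
    by (simp add: uba_F_eq_SUP_poly q_def)
qed

theorem proposition1:
  fixes lam_l lam_u :: real and Tk Tk1 :: nat
  assumes "0 < lam_l" and "lam_l < lam_u" and "Tk1 - Tk \<ge> 1"
  shows "(\<forall>t\<in>{Tk+1..Tk1}. uba_eta lam_l lam_u Tk Tk1 t \<in> {0..1})
       \<and> (\<forall>eta :: nat \<Rightarrow> real.
            uba_F lam_l lam_u Tk Tk1 (uba_eta lam_l lam_u Tk Tk1) \<le> uba_F lam_l lam_u Tk Tk1 eta)"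
  using uba_eta_in_unit_interval uba_F_uba_eta_le uba_F_ge assms(1,2)
  by (meson less_imp_le order_trans)

end
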